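(* Let $s_0,s_1,s_2\ge0$ with $s_0+s_1+s_2>\frac12$ and let $b>\frac12$. Then there is $C>0$ such that for all sufficiently regular $u,v$ (e.g. $J_y^{s_1}u,\,J_y^{s_2}v\in X^{0,b}$), \[ \|J_y^{-s_0}I_x^{1/2}I_{x,-}^{1/2}(u,v)\|_{L^2_{t,x,y}}\le C\|J_y^{s_1}u\|_{0,b}\|J_y^{s_2}v\|_{0,b}. \] The same estimate holds with $x$ and $y$ interchanged, i.e. $\|J_x^{-s_0}I_y^{1/2}I_{y,-}^{1/2}(u,v)\|_{L^2_{t,x,y}}\le C\|J_x^{s_1}u\|_{0,b}\|J_x^{s_2}v\|_{0,b}$.
   Context: Notation: $\langle a\rangle=(1+|a|^2)^{1/2}$; $(\tau,\xi,\eta)$ are the Fourier variables dual to $(t,x,y)$, $\widehat u$ is the space-time Fourier transform. $X^{s,b}$ is the space of tempered distributions $u$ on $\mathbb{R}\times\mathbb{R}^2$ with $\widehat u\in L^2_{loc}$ and $\|u\|_{s,b}=\|\langle\tau-\xi^3-\eta^3\rangle^b\langle(\xi,\eta)\rangle^s\widehat u\|_{L^2_{\tau\xi\eta}}<\infty$. $J_y^{s}$ is the Fourier multiplier with symbol $\langle\eta\rangle^{s}$ and $J_x^s$ the one with symbol $\langle\xi\rangle^s$; $I_x^{1/2}$ has symbol $|\xi|^{1/2}$ and $I_y^{1/2}$ symbol $|\eta|^{1/2}$. $I_{x,-}^{1/2}$ (resp. $I_{y,-}^{1/2}$) is the bilinear operator acting in the space variables by $\mathcal F_{x,y}(A(f_1,f_2))(\xi,\eta)=\int_{\xi_1+\xi_2=\xi,\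 \eta_1+\eta_2=\eta}a\,\widehat{f_1}(\xi_1,\eta_1)\widehat{f_2}(\xi_2,\eta_2)\,d\xi_1d\eta_1$ with $a=|\xi_1-\xi_2|^{1/2}$ (resp. $a=|\eta_1-\eta_2|^{1/2}$). *)

theory Defs
  imports "HOL-Analysis.Analysis"
begin

text \<open>Space-time frequency variables (tau, xi, eta), all real.
  Functions below are Fourier-side objects: f stands for the space-time
  Fourier transform of u.\<close>

type_synonym freq = "real \<times> real \<times> real"

definition japan :: "real \<Rightarrow> real" where
  "japan a = sqrt (1 + a\<^sup>2)"

text \<open>Squared X^{0,b} norm of the function whose Fourier transform is f, after
  applying the Fourier multiplier with symbol m (e.g. m = japan of eta to the s).\<close>
definition X0b_sq :: "real \<Rightarrow> (freq \<Rightarrow> real) \<Rightarrow> (freq \<Rightarrow> complex) \<Rightarrow> ennreal" where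
  "X0b_sq b m f = (\<integral>\<^sup>+ p. ennreal ((japan (fst p - (fst (snd p))^3 - (snd (snd p))^3) powr b
        * m p * norm (f p))\<^sup>2) \<partial>lborel)"

text \<open>Squared L^2 norm (on the Fourier side; equals the L^2_{t,x,y} norm up to a
  constant by Plancherel).\<close>
definition L2_sq :: "(freq \<Rightarrow> complex) \<Rightarrow> ennreal" where
  "L2_sq f = (\<integral>\<^sup>+ p. ennreal ((norm (f p))\<^sup>2) \<partial>lborel)"

text \<open>Fourier transform (up to a normalising constant) of
  J_y^{-s0} I_x^{1/2} I_{x,-}^{1/2}(u,v), where f, g are the Fourier transforms of u, v:
  the product in time becomes a convolution in tau, the bilinear operator a convolution
  in (xi,eta) with weight |xi1 - xi2|^{1/2}.\<close>
definition bil_x :: "real \<Rightarrow> (freq \<Rightarrow> complex) \<Rightarrow> (freq \<Rightarrow> complex) \<Rightarrow> freq \<Rightarrow> complex" where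
  "bil_x s0 f g p = (case p of (\<tau>, \<xi>, \<eta>) \<Rightarrow>
     complex_of_real (japan \<eta> powr (- s0) * sqrt \<bar>\<xi>\<bar>) *
     (\<integral> q. (case q of (\<tau>1, \<xi>1, \<eta>1) \<Rightarrow>
        complex_of_real (sqrt \<bar>\<xi>1 - (\<xi> - \<xi>1)\<bar>) * f (\<tau>1, \<xi>1, \<eta>1)
          * g (\<tau> - \<tau>1, \<xi> - \<xi>1, \<eta> - \<eta>1)) \<partial>lborel))"

definition bil_y :: "real \<Rightarrow> (freq \<Rightarrow> complex) \<Rightarrow> (freq \<Rightarrow> complex) \<Rightarrow> freq \<Rightarrow> complex" where
  "bil_y s0 f g p = (case p of (\<tau>, \<xi>, \<eta>) \<Rightarrow>
     complex_of_real (japan \<xi> powr (- s0) * sqrt \<bar>\<eta>\<bar>) *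
     (\<integral> q. (case q of (\<tau>1, \<xi>1, \<eta>1) \<Rightarrow>
        complex_of_real (sqrt \<bar>\<eta>1 - (\<eta> - \<eta>1)\<bar>) * f (\<tau>1, \<xi>1, \<eta>1)
          * g (\<tau> - \<tau>1, \<xi> - \<xi>1, \<eta> - \<eta>1)) \<partial>lborel))"

end

theory Submission
  imports Defs
begin

(*
  On the Fourier side the operator is dominated by the positive bilinear integral
  \<langle>\<eta>\<rangle>^-s0 |\<xi>|^1/2 \<integral> |2\<xi>1 - \<xi>|^1/2 |f q| |g (p - q)| dq. Factoring out the X^{s,b} weights of f and g
  leaves the kernel |\<xi>|^1/2 |2\<xi>1 - \<xi>|^1/2 \<langle>\<sigma> q\<rangle>^-b \<langle>\<sigma> (p - q)\<rangle>^-b, with \<sigma> = \<tau> - \<xi>^3 - \<eta>^3,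
  times \<langle>\<eta>\<rangle>^-s0 \<langle>\<eta>1\<rangle>^-s1 \<langle>\<eta> - \<eta>1\<rangle>^-s2. For fixed p and \<eta>1 the square of the kernel is
  integrable in (\<tau>1, \<xi>1) uniformly in p: in \<tau>1 it is a convolution of two \<langle>.\<rangle>^-2b with 2b > 1, and
  in \<xi>1 the resonance function \<tau> - \<xi>1^3 - (\<xi> - \<xi>1)^3 has derivative 3\<xi>(\<xi> - 2\<xi>1), which is the
  weight |\<xi>| |2\<xi>1 - \<xi>| up to the factor 3. The three \<eta>-brackets are bounded by the sum of their
  powers -(s0 + s1 + s2); each term decays in one \<eta>-variable with exponent 2(s0 + s1 + s2) > 1, and
  Cauchy-Schwarz in q (input weights) or Minkowski's inequality (output weight) closes the estimate.
  Interchanging x and y is a permutation of coordinates.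
*)

definition ennsqrt :: "ennreal \<Rightarrow> ennreal" where
  "ennsqrt x = (if x = \<infinity> then \<infinity> else ennreal (sqrt (enn2real x)))"

lemma borel_measurable_ennsqrt [measurable]: "ennsqrt \<in> borel_measurable borel"
  unfolding ennsqrt_def by measurable

lemma ennsqrt_power2 [simp]: "(ennsqrt x)\<^sup>2 = x"
  by (cases x) (simp_all add: ennsqrt_def power2_eq_square ennreal_mult'[symmetric])

lemma ennreal_power2_le_imp_le:
  fixes a b :: ennreal
  assumes "a\<^sup>2 \<le> b\<^sup>2"
  shows "a \<le> b"
proof (cases b)
  case (real y)
  show ?thesis
  proof (cases a)
    case (real x)
    with \<open>b = ennreal y\<close> assms have "ennreal (x * x) \<le> ennreal (y * y)"
      using \<open>0 \<le> y\<close> by (simp add: power2_eq_square ennreal_mult'[symmetric])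
    then have "x * x \<le> y * y"
      using \<open>0 \<le> y\<close> ennreal_le_iff mult_nonneg_nonneg by metis
    then have "x \<le> y"
      using real \<open>0 \<le> y\<close> by (metis abs_le_square_iff abs_of_nonneg power2_eq_square)
    then show ?thesis
      using real \<open>b = ennreal y\<close> by simp
  next
    case top
    then show ?thesis
      using assms \<open>b = ennreal y\<close> \<open>0 \<le> y\<close>
      by (simp add: power2_eq_square ennreal_mult'[symmetric] top_unique)
  qed
qed simp

lemma ennsqrt_mono: "x \<le> y \<Longrightarrow> ennsqrt x \<le> ennsqrt y"
  by (rule ennreal_power2_le_imp_le) simp

lemma ennsqrt_mult: "ennsqrt (x * y) = ennsqrt x * ennsqrt y"
  by (rule antisym; rule ennreal_power2_le_imp_le) (simp_all add: power_mult_distrib)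

lemma ennreal_power2_sum3_le:
  fixes a b c :: ennreal
  shows "(a + b + c)\<^sup>2 \<le> 3 * (a\<^sup>2 + b\<^sup>2 + c\<^sup>2)"
proof (cases "a = \<infinity> \<or> b = \<infinity> \<or> c = \<infinity>")
  case True
  then have "a\<^sup>2 + b\<^sup>2 + c\<^sup>2 = \<infinity>"
    by (auto simp: power2_eq_square)
  then have infinite: "3 * (a\<^sup>2 + b\<^sup>2 + c\<^sup>2) = \<infinity>"
    by (simp add: ennreal_mult_eq_top_iff)
  show ?thesis
    unfolding infinite by simp
next
  case False
  obtain x where x: "a = ennreal x" "x \<ge> 0" using False by (cases a) auto
  obtain y where y: "b = ennreal y" "y \<ge> 0" using False by (cases b) auto
  obtain z where z: "c = ennreal z" "z \<ge> 0" using False by (cases c) auto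
  have sum: "a + b + c = ennreal (x + y + z)"
    using x y z by simp
  have "(a + b + c)\<^sup>2 = ennreal ((x + y + z)\<^sup>2)"
    unfolding sum by (rule ennreal_power) (use x y z in simp)
  also have "\<dots> \<le> ennreal (3 * (x\<^sup>2 + y\<^sup>2 + z\<^sup>2))"
    using sum_squares_ge_zero[of "x - y" "y - z"] zero_le_square[of "x - z"]
    by (intro ennreal_leI) (simp add: power2_eq_square algebra_simps)
  also have "\<dots> = 3 * (a\<^sup>2 + b\<^sup>2 + c\<^sup>2)"
    using x y z by (simp add: ennreal_power ennreal_mult)
  finally show ?thesis .
qed

lemma ennreal_power2_le_of_le:
  assumes "x \<ge> 0" "ennreal x \<le> y"
  shows "ennreal (x\<^sup>2) \<le> y\<^sup>2"
  using power_mono[OF assms(2), of 2] assms(1) by (simp add: ennreal_power)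

lemma ennreal_le_power2_of_less_top:
  assumes "K < \<infinity>"
  obtains C :: real where "C > 0" "K \<le> ennreal (C\<^sup>2)"
proof
  define C where "C = sqrt (enn2real K) + 1"
  show "C > 0"
    unfolding C_def by (simp add: add_nonneg_pos)
  have "enn2real K = (sqrt (enn2real K))\<^sup>2"
    by simp
  also have "\<dots> \<le> C\<^sup>2"
    unfolding C_def by (intro power_mono) auto
  finally have "enn2real K \<le> C\<^sup>2" .
  have "K = ennreal (enn2real K)"
    using assms by (intro ennreal_enn2real[symmetric]) simp
  also have "\<dots> \<le> ennreal (C\<^sup>2)"
    by (rule ennreal_leI) fact
  finally show "K \<le> ennreal (C\<^sup>2)" .
qed

text \<open>The Bochner integral of a non-integrable function is \<open>0\<close>, so no integrability hypothesis
  is needed.\<close>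

lemma ennreal_norm_integral_le:
  fixes h :: "'a \<Rightarrow> 'b::{banach, second_countable_topology}"
  shows "ennreal (norm (integral\<^sup>L M h)) \<le> (\<integral>\<^sup>+x. ennreal (norm (h x)) \<partial>M)"
proof (cases "integrable M h")
  case True
  then show ?thesis by (rule integral_norm_bound_ennreal)
next
  case False
  then show ?thesis by (simp add: not_integrable_integral_eq)
qed

lemma nn_integral_lborel_translate:
  fixes h :: "'a::euclidean_space \<Rightarrow> ennreal"
  assumes [measurable]: "h \<in> borel_measurable borel"
  shows "(\<integral>\<^sup>+x. h (x - t) \<partial>lborel) = (\<integral>\<^sup>+x. h x \<partial>lborel)"
  by (subst (2) lborel_distr_plus[symmetric, of "- t"]) (simp add: nn_integral_distr)

lemma nn_integral_lborel_reflect: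
  fixes h :: "'a::euclidean_space \<Rightarrow> ennreal"
  assumes [measurable]: "h \<in> borel_measurable borel"
  shows "(\<integral>\<^sup>+x. h (t - x) \<partial>lborel) = (\<integral>\<^sup>+x. h x \<partial>lborel)"
proof -
  have "(\<integral>\<^sup>+x. h x \<partial>lborel) = (\<integral>\<^sup>+x. h x \<partial>distr lborel borel (\<lambda>x. t + (-1) *\<^sub>R x))"
    by (subst lborel_affine[of "-1" t]) (simp_all add: density_1)
  then show ?thesis
    by (simp add: nn_integral_distr)
qed

lemma nn_integral_Cauchy_Schwarz_ennsqrt:
  assumes [measurable]: "f \<in> borel_measurable M" "g \<in> borel_measurable M"
  shows "(\<integral>\<^sup>+x. f x * g x \<partial>M) \<le> ennsqrt (\<integral>\<^sup>+x. (f x)\<^sup>2 \<partial>M) * ennsqrt (\<integral>\<^sup>+x. (g x)\<^sup>2 \<partial>M)"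
proof (rule ennreal_power2_le_imp_le)
  have "(\<integral>\<^sup>+x. f x * g x \<partial>M)\<^sup>2 \<le> (\<integral>\<^sup>+x. (f x)\<^sup>2 \<partial>M) * (\<integral>\<^sup>+x. (g x)\<^sup>2 \<partial>M)"
    by (rule Cauchy_Schwarz_nn_integral) measurable
  then show "(\<integral>\<^sup>+x. f x * g x \<partial>M)\<^sup>2
      \<le> (ennsqrt (\<integral>\<^sup>+x. (f x)\<^sup>2 \<partial>M) * ennsqrt (\<integral>\<^sup>+x. (g x)\<^sup>2 \<partial>M))\<^sup>2"
    by (simp only: power_mult_distrib ennsqrt_power2)
qed

lemma nn_integral_power2_eq_double:
  assumes [measurable]: "f \<in> borel_measurable M"
  shows "(\<integral>\<^sup>+x. f x \<partial>M)\<^sup>2 = (\<integral>\<^sup>+x. \<integral>\<^sup>+y. f x * f y \<partial>M \<partial>M)"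
  by (simp add: power2_eq_square nn_integral_cmult nn_integral_multc)

lemma (in pair_sigma_finite) nn_integral_Minkowski:
  fixes Y :: "'a \<Rightarrow> 'b \<Rightarrow> ennreal"
  assumes [measurable]: "case_prod Y \<in> borel_measurable (M1 \<Otimes>\<^sub>M M2)"
  shows "(\<integral>\<^sup>+x. (\<integral>\<^sup>+c. Y x c \<partial>M2)\<^sup>2 \<partial>M1) \<le> (\<integral>\<^sup>+c. ennsqrt (\<integral>\<^sup>+x. (Y x c)\<^sup>2 \<partial>M1) \<partial>M2)\<^sup>2"
proof -
  have Y_right: "Y x \<in> borel_measurable M2" if "x \<in> space M1" for x
    using measurable_Pair2[OF assms that] by simp
  have "(\<integral>\<^sup>+x. (\<integral>\<^sup>+c. Y x c \<partial>M2)\<^sup>2 \<partial>M1) = (\<integral>\<^sup>+x. \<integral>\<^sup>+c. \<integral>\<^sup>+c'. Y x c * Y x c' \<partial>M2 \<partial>M2 \<partial>M1)"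
    by (intro nn_integral_cong nn_integral_power2_eq_double Y_right)
  also have "\<dots> = (\<integral>\<^sup>+c. \<integral>\<^sup>+x. \<integral>\<^sup>+c'. Y x c * Y x c' \<partial>M2 \<partial>M1 \<partial>M2)"
    by (rule Fubini'[symmetric]) measurable
  also have "\<dots> = (\<integral>\<^sup>+c. \<integral>\<^sup>+c'. \<integral>\<^sup>+x. Y x c * Y x c' \<partial>M1 \<partial>M2 \<partial>M2)"
    by (intro nn_integral_cong Fubini'[symmetric]) measurable
  also have "\<dots> \<le> (\<integral>\<^sup>+c. \<integral>\<^sup>+c'. ennsqrt (\<integral>\<^sup>+x. (Y x c)\<^sup>2 \<partial>M1) * ennsqrt (\<integral>\<^sup>+x. (Y x c')\<^sup>2 \<partial>M1) \<partial>M2 \<partial>M2)"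
    by (intro nn_integral_mono nn_integral_Cauchy_Schwarz_ennsqrt) measurable
  also have "\<dots> = (\<integral>\<^sup>+c. ennsqrt (\<integral>\<^sup>+x. (Y x c)\<^sup>2 \<partial>M1) \<partial>M2)\<^sup>2"
    by (rule nn_integral_power2_eq_double[symmetric]) measurable
  finally show ?thesis .
qed

lemma nn_integral_convolution_Cauchy_Schwarz:
  fixes k :: "'a::euclidean_space \<Rightarrow> 'a \<Rightarrow> ennreal" and F G :: "'a \<Rightarrow> ennreal"
  assumes [measurable]: "(\<lambda>z. k (fst z) (snd z)) \<in> borel_measurable (lborel \<Otimes>\<^sub>M lborel)"
    "F \<in> borel_measurable borel" "G \<in> borel_measurable borel"
    and K: "\<And>p. (\<integral>\<^sup>+q. (k p q)\<^sup>2 \<partial>lborel) \<le> K"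
  shows "(\<integral>\<^sup>+p. (\<integral>\<^sup>+q. k p q * F q * G (p - q) \<partial>lborel)\<^sup>2 \<partial>lborel)
    \<le> K * (\<integral>\<^sup>+q. (F q)\<^sup>2 \<partial>lborel) * (\<integral>\<^sup>+q. (G q)\<^sup>2 \<partial>lborel)"
proof -
  have [measurable]: "k p \<in> borel_measurable lborel" for p
    using measurable_Pair2[OF assms(1), of p] by simp
  have pointwise: "(\<integral>\<^sup>+q. k p q * F q * G (p - q) \<partial>lborel)\<^sup>2 \<le> K * (\<integral>\<^sup>+q. (F q)\<^sup>2 * (G (p - q))\<^sup>2 \<partial>lborel)" for p
  proof -
    have "(\<integral>\<^sup>+q. k p q * (F q * G (p - q)) \<partial>lborel)\<^sup>2
        \<le> (\<integral>\<^sup>+q. (k p q)\<^sup>2 \<partial>lborel) * (\<integral>\<^sup>+q. (F q * G (p - q))\<^sup>2 \<partial>lborel)"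
      by (rule Cauchy_Schwarz_nn_integral) measurable
    also have "\<dots> \<le> K * (\<integral>\<^sup>+q. (F q * G (p - q))\<^sup>2 \<partial>lborel)"
      by (intro mult_right_mono K) simp
    finally show ?thesis
      by (simp add: mult.assoc power_mult_distrib)
  qed
  have "(\<integral>\<^sup>+p. (\<integral>\<^sup>+q. k p q * F q * G (p - q) \<partial>lborel)\<^sup>2 \<partial>lborel)
      \<le> K * (\<integral>\<^sup>+p. \<integral>\<^sup>+q. (F q)\<^sup>2 * (G (p - q))\<^sup>2 \<partial>lborel \<partial>lborel)"
    by (subst nn_integral_cmult[symmetric]) (measurable, intro nn_integral_mono pointwise)
  also have "(\<integral>\<^sup>+p. \<integral>\<^sup>+q. (F q)\<^sup>2 * (G (p - q))\<^sup>2 \<partial>lborel \<partial>lborel)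
      = (\<integral>\<^sup>+q. (F q)\<^sup>2 * (\<integral>\<^sup>+p. (G (p - q))\<^sup>2 \<partial>lborel) \<partial>lborel)"
    by (subst lborel_pair.Fubini') (measurable, simp add: nn_integral_cmult)
  also have "\<dots> = (\<integral>\<^sup>+q. (F q)\<^sup>2 \<partial>lborel) * (\<integral>\<^sup>+q. (G q)\<^sup>2 \<partial>lborel)"
    using nn_integral_lborel_translate[of "\<lambda>x. (G x)\<^sup>2"] by (simp add: nn_integral_multc)
  finally show ?thesis
    by (simp add: mult.assoc)
qed

lemma nn_integral_ennsqrt_convolution_le:
  fixes A B :: "'a::euclidean_space \<Rightarrow> ennreal"
  assumes [measurable]: "A \<in> borel_measurable borel" "B \<in> borel_measurable borel"
  shows "(\<integral>\<^sup>+c. ennsqrt (A c) * ennsqrt (B (t - c)) \<partial>lborel)\<^sup>2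
    \<le> (\<integral>\<^sup>+c. A c \<partial>lborel) * (\<integral>\<^sup>+c. B c \<partial>lborel)"
proof -
  have "(\<integral>\<^sup>+c. ennsqrt (A c) * ennsqrt (B (t - c)) \<partial>lborel)\<^sup>2
      \<le> (\<integral>\<^sup>+c. (ennsqrt (A c))\<^sup>2 \<partial>lborel) * (\<integral>\<^sup>+c. (ennsqrt (B (t - c)))\<^sup>2 \<partial>lborel)"
    by (rule Cauchy_Schwarz_nn_integral) measurable
  then show ?thesis
    by (simp add: nn_integral_lborel_reflect)
qed

lemma japan_gt_0: "japan a > 0"
  unfolding japan_def by (simp add: add_pos_nonneg)

lemma japan_ge_1: "japan a \<ge> 1"
  unfolding japan_def by simp

lemma abs_le_japan: "\<bar>a\<bar> \<le> japan a"
  unfolding japan_def by (simp add: real_le_rsqrt)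

lemma borel_measurable_japan [measurable]: "japan \<in> borel_measurable borel"
  unfolding japan_def by measurable

lemma powr_neg_product_le_sum:
  fixes x y z s0 s1 s2 :: real
  assumes "x > 0" "y > 0" "z > 0" "s0 \<ge> 0" "s1 \<ge> 0" "s2 \<ge> 0"
  shows "x powr (-s0) * y powr (-s1) * z powr (-s2)
    \<le> x powr (-(s0+s1+s2)) + y powr (-(s0+s1+s2)) + z powr (-(s0+s1+s2))"
proof -
  define m where "m = min x (min y z)"
  have m: "m > 0" "m \<le> x" "m \<le> y" "m \<le> z" "m = x \<or> m = y \<or> m = z"
    using assms unfolding m_def by linarith+
  have "x powr (-s0) * y powr (-s1) * z powr (-s2) \<le> m powr (-s0) * m powr (-s1) * m powr (-s2)"
    using assms m by (intro mult_mono powr_mono2') auto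
  also have "\<dots> = m powr (-(s0+s1+s2))"
    using m by (simp add: powr_add[symmetric] algebra_simps)
  also have "\<dots> \<le> x powr (-(s0+s1+s2)) + y powr (-(s0+s1+s2)) + z powr (-(s0+s1+s2))"
    using m(5) by (auto intro: add_increasing add_increasing2)
  finally show ?thesis .
qed

definition japan_decay :: "real \<Rightarrow> real \<Rightarrow> ennreal" where
  "japan_decay r v = ennreal (japan v powr (-r))"

lemma borel_measurable_japan_decay [measurable]: "japan_decay r \<in> borel_measurable borel"
  unfolding japan_decay_def by measurable

lemma japan_decay_mult: "japan_decay r v * japan_decay r' v = japan_decay (r + r') v"
  unfolding japan_decay_def using japan_gt_0[of v]
  by (simp add: ennreal_mult'[symmetric] powr_add[symmetric])

lemma japan_decay_power2: "(japan_decay r v)\<^sup>2 = japan_decay (2 * r) v"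
  by (simp add: power2_eq_square japan_decay_mult)

lemma japan_decay_product_le_sum:
  assumes "s0 \<ge> 0" "s1 \<ge> 0" "s2 \<ge> 0"
  shows "japan_decay s0 a * japan_decay s1 c * japan_decay s2 d
    \<le> japan_decay (s0 + s1 + s2) a + japan_decay (s0 + s1 + s2) c + japan_decay (s0 + s1 + s2) d"
  using powr_neg_product_le_sum[OF japan_gt_0 japan_gt_0 japan_gt_0 assms, of a c d]
  unfolding japan_decay_def
  by (simp add: ennreal_mult'[symmetric] ennreal_plus[symmetric] ennreal_leI del: ennreal_plus)

definition japan_decay_mass :: "real \<Rightarrow> ennreal" where
  "japan_decay_mass r = (\<integral>\<^sup>+v. japan_decay r v \<partial>lborel)"

lemma nn_integral_powr_tail:
  fixes r :: real
  assumes r: "r > 1"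
  shows "(\<integral>\<^sup>+x. ennreal (x powr (-r) * indicator {1..} x) \<partial>lborel) = ennreal (1 / (r - 1))"
proof -
  have "((\<lambda>x. x powr (-r)) has_integral -(1 powr (-r + 1)) / (-r + 1)) {1..}"
    by (rule has_integral_powr_to_inf) (use r in auto)
  moreover have "-(1 powr (-r + 1)) / (-r + 1) = 1 / (r - 1)"
    using r by (simp add: field_simps)
  ultimately have "((\<lambda>x. x powr (-r)) has_integral 1 / (r - 1)) {1..}"
    by simp
  then have "((\<lambda>x. if x \<in> {1..} then x powr (-r) else 0) has_integral 1 / (r - 1)) UNIV"
    by (subst has_integral_restrict_UNIV)
  moreover have "(\<lambda>x. if x \<in> {1..} then x powr (-r) else 0) = (\<lambda>x. x powr (-r) * indicator {1..} x)"
    by (auto simp: indicator_def)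
  ultimately have "((\<lambda>x. x powr (-r) * indicator {1..} x) has_integral 1 / (r - 1)) UNIV"
    by simp
  then show ?thesis
    by (rule nn_integral_has_integral_lborel[rotated 2]) (auto simp: indicator_def)
qed

lemma japan_decay_le_tails:
  assumes r: "r \<ge> 0"
  shows "japan_decay r x
    \<le> indicator {-1..1} x + ennreal (x powr (-r) * indicator {1..} x) + ennreal ((0 - x) powr (-r) * indicator {1..} (0 - x))"
    (is "_ \<le> _ + ?tail x + ?tail (0 - x)")
proof -
  consider "x \<ge> 1" | "x \<le> -1" | "\<bar>x\<bar> \<le> 1"
    by linarith
  then show ?thesis
  proof cases
    case 1
    then have "japan x powr (-r) \<le> x powr (-r)"
      using abs_le_japan[of x] r by (intro powr_mono2') auto
    with 1 have "japan_decay r x \<le> ?tail x"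
      by (simp add: japan_decay_def ennreal_leI)
    then show ?thesis
      by (rule add_increasing2[OF zero_le add_increasing[OF zero_le]])
  next
    case 2
    then have "japan x powr (-r) \<le> (-x) powr (-r)"
      using abs_le_japan[of x] r by (intro powr_mono2') auto
    with 2 have "japan_decay r x \<le> ?tail (0 - x)"
      by (simp add: japan_decay_def ennreal_leI)
    then show ?thesis
      by (rule add_increasing[OF zero_le])
  next
    case 3
    have "japan x powr (-r) \<le> 1 powr (-r)"
      using japan_ge_1[of x] r by (intro powr_mono2') auto
    with 3 have "japan_decay r x \<le> indicator {-1..1} x"
      by (simp add: japan_decay_def indicator_def abs_le_iff)
    then show ?thesis
      by (rule add_increasing2[OF zero_le add_increasing2[OF zero_le]])
  qed
qed

lemma japan_decay_mass_finite:
  assumes r: "r > 1"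
  shows "japan_decay_mass r < \<infinity>"
proof -
  define tail where "tail x = ennreal (x powr (-r) * indicator {1..} x)" for x :: real
  have [measurable]: "tail \<in> borel_measurable borel"
    unfolding tail_def by measurable
  have "japan_decay_mass r \<le> (\<integral>\<^sup>+x. indicator {-1..1} x + tail x + tail (0 - x) \<partial>lborel)"
    unfolding japan_decay_mass_def tail_def using r by (intro nn_integral_mono japan_decay_le_tails) simp
  also have "\<dots> = (\<integral>\<^sup>+x. indicator {-1..1} x + tail x \<partial>lborel) + (\<integral>\<^sup>+x. tail (0 - x) \<partial>lborel)"
    by (rule nn_integral_add) measurable
  also have "(\<integral>\<^sup>+x. indicator {-1..1} x + tail x \<partial>lborel)
      = (\<integral>\<^sup>+x. indicator {-1..1::real} x \<partial>lborel) + (\<integral>\<^sup>+x. tail x \<partial>lborel)"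
    by (rule nn_integral_add) measurable
  also have "(\<integral>\<^sup>+x. tail (0 - x) \<partial>lborel) = (\<integral>\<^sup>+x. tail x \<partial>lborel)"
    by (rule nn_integral_lborel_reflect) measurable
  also have "(\<integral>\<^sup>+x. tail x \<partial>lborel) = ennreal (1 / (r - 1))"
    unfolding tail_def by (rule nn_integral_powr_tail[OF r])
  also have "(\<integral>\<^sup>+x. indicator {-1..1::real} x \<partial>lborel) = 2"
    by simp
  also have "2 + ennreal (1 / (r - 1)) + ennreal (1 / (r - 1)) < \<infinity>"
    by (simp add: less_top[symmetric])
  finally show ?thesis .
qed

section \<open>The one-dimensional resonance integral\<close>

lemma nn_integral_square_substitution_le:
  fixes f :: "real \<Rightarrow> ennreal" and c :: real
  assumes f [measurable]: "f \<in> borel_measurable borel" and c: "c > 0"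
  shows "(\<integral>\<^sup>+t. f (c * t\<^sup>2) * ennreal (2 * c * t) * indicator {0..} t \<partial>lborel) \<le> (\<integral>\<^sup>+v. f v \<partial>lborel)"
proof -
  define F where "F t = f (c * t\<^sup>2) * ennreal (2 * c * t)" for t
  have [measurable]: "F \<in> borel_measurable borel"
    unfolding F_def by measurable
  have "F t * indicator {0..} t = (SUP n::nat. F t * indicator {0..real n + 1} t)" for t
  proof (cases "t \<ge> 0")
    case True
    obtain n :: nat where "t \<le> real n + 1"
      using real_arch_simple[of t] by (metis add_increasing2 zero_le_one)
    with True show ?thesis
      by (intro antisym SUP_upper2[of n] SUP_least) (auto simp: indicator_def)
  qed (simp add: indicator_def)
  then have "(\<integral>\<^sup>+t. F t * indicator {0..} t \<partial>lborel) = (SUP n::nat. \<integral>\<^sup>+t. F t * indicator {0..real n + 1} t \<partial>lborel)"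
    by (simp add: nn_integral_monotone_convergence_SUP incseq_def le_fun_def indicator_def mult_left_mono)
  also have "\<dots> \<le> (\<integral>\<^sup>+v. f v \<partial>lborel)"
  proof (rule SUP_least)
    fix n :: nat
    have "(\<integral>\<^sup>+t. F t * indicator {0..real n + 1} t \<partial>lborel)
        = (\<integral>\<^sup>+v. f v * indicator {c * 0\<^sup>2..c * (real n + 1)\<^sup>2} v \<partial>lborel)"
      unfolding F_def
      by (rule nn_integral_substitution_aux[symmetric, where g' = "\<lambda>t. 2 * c * t"])
        (use c in \<open>auto intro!: derivative_eq_intros continuous_intros\<close>)
    also have "\<dots> \<le> (\<integral>\<^sup>+v. f v \<partial>lborel)"
      by (intro nn_integral_mono) (simp add: indicator_def)
    finally show "(\<integral>\<^sup>+t. F t * indicator {0..real n + 1} t \<partial>lborel) \<le> (\<integral>\<^sup>+v. f v \<partial>lborel)" .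
  qed
  finally show ?thesis
    unfolding F_def .
qed

lemma resonance_half_line_le:
  "(\<integral>\<^sup>+t. ennreal (\<bar>\<xi>\<bar> * (2 * t)) * japan_decay r (E - 3 * \<xi> * t\<^sup>2) * indicator {0..} t \<partial>lborel)
    \<le> ennreal (1/3) * japan_decay_mass r"
proof (cases "\<xi> = 0")
  case True
  then show ?thesis by simp
next
  case False
  define c where "c = 3 * \<bar>\<xi>\<bar>"
  have c: "c > 0"
    using False by (simp add: c_def)
  define f where "f v = japan_decay r (E - sgn \<xi> * v)" for v
  have [measurable]: "f \<in> borel_measurable borel"
    unfolding f_def by measurable
  have mass_f: "(\<integral>\<^sup>+v. f v \<partial>lborel) = japan_decay_mass r"
  proof (cases "\<xi> > 0")
    case True
    then show ?thesis
      unfolding f_def japan_decay_mass_def by (simp add: nn_integral_lborel_reflect)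
  next
    case False
    with \<open>\<xi> \<noteq> 0\<close> have "sgn \<xi> = -1"
      by simp
    then show ?thesis
      unfolding f_def japan_decay_mass_def using nn_integral_lborel_translate[of "japan_decay r" "- E"]
      by (simp add: add.commute)
  qed
  have "ennreal (\<bar>\<xi>\<bar> * (2 * t)) * japan_decay r (E - 3 * \<xi> * t\<^sup>2) * indicator {0..} t
      = ennreal (1/3) * (f (c * t\<^sup>2) * ennreal (2 * c * t) * indicator {0..} t)" for t
  proof -
    have phase: "E - sgn \<xi> * (c * t\<^sup>2) = E - 3 * \<xi> * t\<^sup>2"
      using sgn_mult_abs[of \<xi>] by (simp add: c_def algebra_simps)
    have weight: "ennreal (1/3) * ennreal (2 * c * t) = ennreal (\<bar>\<xi>\<bar> * (2 * t))"
      by (simp add: c_def ennreal_mult'[symmetric] ac_simps)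
    show ?thesis
      unfolding f_def phase weight[symmetric] by (simp only: ac_simps)
  qed
  then have "(\<integral>\<^sup>+t. ennreal (\<bar>\<xi>\<bar> * (2 * t)) * japan_decay r (E - 3 * \<xi> * t\<^sup>2) * indicator {0..} t \<partial>lborel)
      = ennreal (1/3) * (\<integral>\<^sup>+t. f (c * t\<^sup>2) * ennreal (2 * c * t) * indicator {0..} t \<partial>lborel)"
    by (simp add: nn_integral_cmult)
  also have "\<dots> \<le> ennreal (1/3) * japan_decay_mass r"
    unfolding mass_f[symmetric] by (intro mult_left_mono nn_integral_square_substitution_le c) auto
  finally show ?thesis .
qed

text \<open>The substitution \<open>x = \<xi>/2 + t\<close> turns the cubic phase into
  \<open>E - \<xi>\<^sup>3/4 - 3 \<xi> t\<^sup>2\<close>, whose derivative in \<open>t\<close> is the weight \<open>\<bar>\<xi>\<bar> \<bar>2x - \<xi>\<bar>\<close> up to the factor 3.\<close>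

lemma resonance_integral_le:
  "(\<integral>\<^sup>+x. ennreal (\<bar>\<xi>\<bar> * \<bar>2 * x - \<xi>\<bar>) * japan_decay r (E - x^3 - (\<xi> - x)^3) \<partial>lborel)
     \<le> ennreal (2/3) * japan_decay_mass r"
proof -
  define E' where "E' = E - \<xi>^3 / 4"
  define P where "P t = ennreal (\<bar>\<xi>\<bar> * (2 * t)) * japan_decay r (E' - 3 * \<xi> * t\<^sup>2) * indicator {0..} t" for t
  have [measurable]: "P \<in> borel_measurable borel"
    unfolding P_def by measurable
  have "(\<integral>\<^sup>+x. ennreal (\<bar>\<xi>\<bar> * \<bar>2 * x - \<xi>\<bar>) * japan_decay r (E - x^3 - (\<xi> - x)^3) \<partial>lborel)
      = (\<integral>\<^sup>+t. ennreal (\<bar>\<xi>\<bar> * \<bar>2 * t\<bar>) * japan_decay r (E' - 3 * \<xi> * t\<^sup>2) \<partial>lborel)"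
  proof -
    have "E - (t + \<xi>/2)^3 - (\<xi>/2 - t)^3 = E' - 3 * \<xi> * t\<^sup>2" for t
      unfolding E'_def by (simp add: power3_eq_cube power2_eq_square field_simps)
    then show ?thesis
      using nn_integral_lborel_translate[of "\<lambda>x. ennreal (\<bar>\<xi>\<bar> * \<bar>2 * x - \<xi>\<bar>) * japan_decay r (E - x^3 - (\<xi> - x)^3)" "- \<xi>/2"]
      by simp
  qed
  also have "\<dots> \<le> (\<integral>\<^sup>+t. P t + P (0 - t) \<partial>lborel)"
    by (intro nn_integral_mono) (auto simp: P_def indicator_def)
  also have "\<dots> = (\<integral>\<^sup>+t. P t \<partial>lborel) + (\<integral>\<^sup>+t. P (0 - t) \<partial>lborel)"
    by (rule nn_integral_add) measurable
  also have "(\<integral>\<^sup>+t. P (0 - t) \<partial>lborel) = (\<integral>\<^sup>+t. P t \<partial>lborel)"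
    by (rule nn_integral_lborel_reflect) measurable
  also have "(\<integral>\<^sup>+t. P t \<partial>lborel) + (\<integral>\<^sup>+t. P t \<partial>lborel)
      \<le> ennreal (1/3) * japan_decay_mass r + ennreal (1/3) * japan_decay_mass r"
    unfolding P_def by (intro add_mono resonance_half_line_le)
  also have "\<dots> = ennreal (2/3) * japan_decay_mass r"
    by (simp add: distrib_right[symmetric] ennreal_plus[symmetric] del: ennreal_plus)
  finally show ?thesis .
qed

abbreviation lborel2 :: "(real \<times> real) measure" where
  "lborel2 \<equiv> lborel \<Otimes>\<^sub>M lborel"

abbreviation lborel3 :: "freq measure" where
  "lborel3 \<equiv> lborel \<Otimes>\<^sub>M lborel2"

abbreviation borel2 :: "(real \<times> real) measure" where
  "borel2 \<equiv> borel \<Otimes>\<^sub>M borel"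

abbreviation borel3 :: "freq measure" where
  "borel3 \<equiv> borel \<Otimes>\<^sub>M borel2"

lemma lborel_real2_eq: "(lborel :: (real \<times> real) measure) = lborel2"
  by (simp add: lborel_prod)

lemma lborel_freq_eq: "(lborel :: freq measure) = lborel3"
  by (simp add: lborel_prod)

lemma borel_measurable_borel2_iff:
  "h \<in> borel_measurable (borel :: (real \<times> real) measure) \<longleftrightarrow> h \<in> borel_measurable borel2"
  by (simp add: borel_prod)

lemma borel_measurable_borel3_iff: "h \<in> borel_measurable (borel :: freq measure) \<longleftrightarrow> h \<in> borel_measurable borel3"
  by (simp add: borel_prod)

interpretation lborel3: sigma_finite_measure lborel3
  using lborel.sigma_finite_measure_axioms[where 'a=freq] by (simp add: lborel_freq_eq)

interpretation lborel2_lborel: pair_sigma_finite lborel2 lborel ..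

lemma measurable_freq_diff [measurable (raw)]:
  assumes [measurable]: "f \<in> N \<rightarrow>\<^sub>M borel3" "g \<in> N \<rightarrow>\<^sub>M borel3"
  shows "(\<lambda>x. f x - g x) \<in> N \<rightarrow>\<^sub>M borel3"
proof -
  have "(\<lambda>x. f x - g x)
      = (\<lambda>x. (fst (f x) - fst (g x), fst (snd (f x)) - fst (snd (g x)), snd (snd (f x)) - snd (snd (g x))))"
    by (simp add: fun_eq_iff prod_eq_iff)
  then show ?thesis
    by simp
qed

text \<open>The rule above would need \<open>(\<lambda>q. q) \<in> borel3 \<rightarrow>\<^sub>M borel3\<close>, which the measurability
  prover does not find, so translations by a constant get a rule of their own.\<close>

lemma measurable_freq_diff_left [measurable]: "(\<lambda>q. p - q) \<in> borel3 \<rightarrow>\<^sub>M borel3"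
proof -
  have "(\<lambda>q. p - q) = (\<lambda>q. (fst p - fst q, fst (snd p) - fst (snd q), snd (snd p) - snd (snd q)))"
    by (simp add: fun_eq_iff prod_eq_iff)
  then show ?thesis
    by simp
qed

lemma nn_integral_lborel2:
  assumes [measurable]: "h \<in> borel_measurable borel2"
  shows "(\<integral>\<^sup>+x. h x \<partial>lborel2) = (\<integral>\<^sup>+a. \<integral>\<^sup>+b. h (a, b) \<partial>lborel \<partial>lborel)"
  by (rule lborel.nn_integral_fst[symmetric]) measurable

lemma nn_integral_lborel3:
  assumes [measurable]: "h \<in> borel_measurable borel3"
  shows "(\<integral>\<^sup>+x. h x \<partial>lborel3) = (\<integral>\<^sup>+a. \<integral>\<^sup>+b. \<integral>\<^sup>+c. h (a, b, c) \<partial>lborel \<partial>lborel \<partial>lborel)"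
  by (simp add: lborel_pair.nn_integral_fst[symmetric] nn_integral_lborel2)

lemma nn_integral_lborel3_eta_last:
  assumes [measurable]: "h \<in> borel_measurable borel3"
  shows "(\<integral>\<^sup>+x. h x \<partial>lborel3) = (\<integral>\<^sup>+c. \<integral>\<^sup>+y. h (fst y, snd y, c) \<partial>lborel2 \<partial>lborel)"
proof -
  have "(\<integral>\<^sup>+x. h x \<partial>lborel3) = (\<integral>\<^sup>+a. \<integral>\<^sup>+b. \<integral>\<^sup>+c. h (a, b, c) \<partial>lborel \<partial>lborel \<partial>lborel)"
    by (rule nn_integral_lborel3) measurable
  also have "\<dots> = (\<integral>\<^sup>+a. \<integral>\<^sup>+c. \<integral>\<^sup>+b. h (a, b, c) \<partial>lborel \<partial>lborel \<partial>lborel)"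
    by (intro nn_integral_cong lborel_pair.Fubini') measurable
  also have "\<dots> = (\<integral>\<^sup>+c. \<integral>\<^sup>+a. \<integral>\<^sup>+b. h (a, b, c) \<partial>lborel \<partial>lborel \<partial>lborel)"
    by (rule lborel_pair.Fubini') measurable
  finally show ?thesis
    by (simp add: nn_integral_lborel2)
qed

lemma nn_integral_lborel3_swap_xi_eta:
  assumes [measurable]: "h \<in> borel_measurable borel3"
  shows "(\<integral>\<^sup>+x. h (fst x, snd (snd x), fst (snd x)) \<partial>lborel3) = (\<integral>\<^sup>+x. h x \<partial>lborel3)"
proof -
  have "(\<integral>\<^sup>+x. h (fst x, snd (snd x), fst (snd x)) \<partial>lborel3)
      = (\<integral>\<^sup>+a. \<integral>\<^sup>+b. \<integral>\<^sup>+c. h (a, c, b) \<partial>lborel \<partial>lborel \<partial>lborel)"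
    by (subst nn_integral_lborel3) simp_all
  also have "\<dots> = (\<integral>\<^sup>+a. \<integral>\<^sup>+c. \<integral>\<^sup>+b. h (a, c, b) \<partial>lborel \<partial>lborel \<partial>lborel)"
    by (intro nn_integral_cong lborel_pair.Fubini') measurable
  finally show ?thesis
    by (simp add: nn_integral_lborel3)
qed

section \<open>The kernel of the bilinear estimate\<close>

lemma resonance_integral_2d_le:
  "(\<integral>\<^sup>+y. ennreal (\<bar>\<xi>\<bar> * \<bar>2 * snd y - \<xi>\<bar>) * japan_decay r (fst y - snd y^3 - c1)
        * japan_decay r (\<tau> - fst y - (\<xi> - snd y)^3 - c2) \<partial>lborel2)
    \<le> ennreal (2/3) * japan_decay_mass r * japan_decay_mass r"
proof -
  let ?w = "\<lambda>x. ennreal (\<bar>\<xi>\<bar> * \<bar>2 * x - \<xi>\<bar>)"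
  let ?g = "\<lambda>x t. ?w x * japan_decay r (t - x^3 - c1) * japan_decay r (\<tau> - t - (\<xi> - x)^3 - c2)"
  let ?E = "\<lambda>u x. \<tau> - c1 - c2 - u - x^3 - (\<xi> - x)^3"
  have "(\<integral>\<^sup>+y. ?g (snd y) (fst y) \<partial>lborel2) = (\<integral>\<^sup>+t. \<integral>\<^sup>+x. ?g x t \<partial>lborel \<partial>lborel)"
    by (subst nn_integral_lborel2) simp_all
  also have "\<dots> = (\<integral>\<^sup>+x. \<integral>\<^sup>+t. ?g x t \<partial>lborel \<partial>lborel)"
    by (rule lborel_pair.Fubini') measurable
  also have "\<dots> = (\<integral>\<^sup>+x. \<integral>\<^sup>+u. japan_decay r u * (?w x * japan_decay r (?E u x)) \<partial>lborel \<partial>lborel)"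
  proof (rule nn_integral_cong)
    fix x :: real
    have "(\<integral>\<^sup>+t. ?g x t \<partial>lborel) = (\<integral>\<^sup>+u. ?g x (u + (x^3 + c1)) \<partial>lborel)"
      using nn_integral_lborel_translate[where t = "- (x^3 + c1)" and h = "?g x"]
      unfolding diff_minus_eq_add minus_minus by simp
    also have "\<dots> = (\<integral>\<^sup>+u. japan_decay r u * (?w x * japan_decay r (?E u x)) \<partial>lborel)"
    proof (rule nn_integral_cong)
      fix u :: real
      have "u + (x^3 + c1) - x^3 - c1 = u" "\<tau> - (u + (x^3 + c1)) - (\<xi> - x)^3 - c2 = ?E u x"
        by simp_all
      then show "?g x (u + (x^3 + c1)) = japan_decay r u * (?w x * japan_decay r (?E u x))"
        by (simp only: ac_simps)
    qed
    finally show "(\<integral>\<^sup>+t. ?g x t \<partial>lborel) = \<dots>" .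
  qed
  also have "\<dots> = (\<integral>\<^sup>+u. japan_decay r u * (\<integral>\<^sup>+x. ?w x * japan_decay r (?E u x) \<partial>lborel) \<partial>lborel)"
    by (subst lborel_pair.Fubini'[symmetric]) (measurable, simp add: nn_integral_cmult)
  also have "\<dots> \<le> (\<integral>\<^sup>+u. japan_decay r u * (ennreal (2/3) * japan_decay_mass r) \<partial>lborel)"
    by (intro nn_integral_mono mult_left_mono) (simp_all add: resonance_integral_le)
  also have "\<dots> = ennreal (2/3) * japan_decay_mass r * japan_decay_mass r"
    by (simp add: nn_integral_multc japan_decay_mass_def mult_ac)
  finally show ?thesis .
qed

definition modulation :: "freq \<Rightarrow> real" where
  "modulation q = fst q - (fst (snd q))^3 - (snd (snd q))^3"

lemma borel_measurable_modulation [measurable]: "modulation \<in> borel_measurable borel3"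
  unfolding modulation_def by measurable

definition kernel :: "real \<Rightarrow> freq \<Rightarrow> freq \<Rightarrow> ennreal" where
  "kernel b p q = ennreal (sqrt \<bar>fst (snd p)\<bar> * sqrt \<bar>2 * fst (snd q) - fst (snd p)\<bar>)
     * japan_decay b (modulation q) * japan_decay b (modulation (p - q))"

lemma borel_measurable_kernel [measurable]: "case_prod (kernel b) \<in> borel_measurable (borel3 \<Otimes>\<^sub>M borel3)"
  unfolding kernel_def by measurable

lemma borel_measurable_kernel_right [measurable]: "kernel b p \<in> borel_measurable borel3"
  using measurable_Pair2[OF borel_measurable_kernel, of p] by (simp add: space_pair_measure)

lemma kernel_power2:
  "(kernel b p q)\<^sup>2 = ennreal (\<bar>fst (snd p)\<bar> * \<bar>2 * fst (snd q) - fst (snd p)\<bar>)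
     * japan_decay (2 * b) (modulation q) * japan_decay (2 * b) (modulation (p - q))"
proof -
  have "(ennreal (sqrt \<bar>fst (snd p)\<bar> * sqrt \<bar>2 * fst (snd q) - fst (snd p)\<bar>))\<^sup>2
      = ennreal (\<bar>fst (snd p)\<bar> * \<bar>2 * fst (snd q) - fst (snd p)\<bar>)"
    by (simp add: ennreal_power power_mult_distrib)
  then show ?thesis
    by (simp add: kernel_def power_mult_distrib japan_decay_power2)
qed

lemma kernel_diff_right: "kernel b p (p - q) = kernel b p q"
proof -
  have "\<bar>2 * (fst (snd p) - fst (snd q)) - fst (snd p)\<bar> = \<bar>2 * fst (snd q) - fst (snd p)\<bar>"
    using abs_minus_commute[of "fst (snd p)" "2 * fst (snd q)"] by (simp add: algebra_simps)
  then show ?thesis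
    by (simp add: kernel_def mult_ac)
qed

lemma kernel_slice_bound:
  "(\<integral>\<^sup>+y. (kernel b p (fst y, snd y, c))\<^sup>2 \<partial>lborel2)
    \<le> ennreal (2/3) * japan_decay_mass (2 * b) * japan_decay_mass (2 * b)"
proof -
  obtain \<tau> \<xi> \<eta> where p: "p = (\<tau>, \<xi>, \<eta>)"
    by (cases p) auto
  have "(\<integral>\<^sup>+y. (kernel b p (fst y, snd y, c))\<^sup>2 \<partial>lborel2)
      = (\<integral>\<^sup>+y. ennreal (\<bar>\<xi>\<bar> * \<bar>2 * snd y - \<xi>\<bar>) * japan_decay (2 * b) (fst y - snd y^3 - c^3)
          * japan_decay (2 * b) (\<tau> - fst y - (\<xi> - snd y)^3 - (\<eta> - c)^3) \<partial>lborel2)"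
    by (simp add: kernel_power2 modulation_def p)
  also have "\<dots> \<le> ennreal (2/3) * japan_decay_mass (2 * b) * japan_decay_mass (2 * b)"
    by (rule resonance_integral_2d_le)
  finally show ?thesis .
qed

lemma kernel_weighted_bound:
  "(\<integral>\<^sup>+q. (kernel b p q)\<^sup>2 * japan_decay r (snd (snd q)) \<partial>lborel3)
    \<le> ennreal (2/3) * japan_decay_mass (2 * b) * japan_decay_mass (2 * b) * japan_decay_mass r"
proof -
  have "(\<integral>\<^sup>+q. (kernel b p q)\<^sup>2 * japan_decay r (snd (snd q)) \<partial>lborel3)
      = (\<integral>\<^sup>+c. \<integral>\<^sup>+y. japan_decay r c * (kernel b p (fst y, snd y, c))\<^sup>2 \<partial>lborel2 \<partial>lborel)"
    by (subst nn_integral_lborel3_eta_last) (measurable, simp add: mult.commute)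
  also have "\<dots> = (\<integral>\<^sup>+c. japan_decay r c * (\<integral>\<^sup>+y. (kernel b p (fst y, snd y, c))\<^sup>2 \<partial>lborel2) \<partial>lborel)"
    by (intro nn_integral_cong nn_integral_cmult) measurable
  also have "\<dots> \<le> (\<integral>\<^sup>+c. japan_decay r c * (ennreal (2/3) * japan_decay_mass (2 * b) * japan_decay_mass (2 * b)) \<partial>lborel)"
    by (intro nn_integral_mono mult_left_mono kernel_slice_bound) simp
  also have "\<dots> = ennreal (2/3) * japan_decay_mass (2 * b) * japan_decay_mass (2 * b) * japan_decay_mass r"
    by (simp add: nn_integral_multc japan_decay_mass_def mult_ac)
  finally show ?thesis .
qed

lemma kernel_difference_weighted_bound:
  "(\<integral>\<^sup>+q. (kernel b p q)\<^sup>2 * japan_decay r (snd (snd p) - snd (snd q)) \<partial>lborel3)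
    \<le> ennreal (2/3) * japan_decay_mass (2 * b) * japan_decay_mass (2 * b) * japan_decay_mass r"
proof -
  let ?h = "\<lambda>q. (kernel b p q)\<^sup>2 * japan_decay r (snd (snd q))"
  have "(\<integral>\<^sup>+q. (kernel b p q)\<^sup>2 * japan_decay r (snd (snd p) - snd (snd q)) \<partial>lborel3)
      = (\<integral>\<^sup>+q. ?h (p - q) \<partial>lborel)"
    by (simp add: lborel_freq_eq kernel_diff_right)
  also have "\<dots> = (\<integral>\<^sup>+q. ?h q \<partial>lborel3)"
    by (subst nn_integral_lborel_reflect) (simp_all add: borel_measurable_borel3_iff lborel_freq_eq)
  finally show ?thesis
    using kernel_weighted_bound by simp
qed

definition kernel_convolution ::
    "real \<Rightarrow> (freq \<Rightarrow> freq \<Rightarrow> ennreal) \<Rightarrow> (freq \<Rightarrow> ennreal) \<Rightarrow> (freq \<Rightarrow> ennreal) \<Rightarrow> freq \<Rightarrow> ennreal" where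
  "kernel_convolution b w F G p = (\<integral>\<^sup>+q. kernel b p q * w p q * F q * G (p - q) \<partial>lborel3)"

lemma borel_measurable_kernel_convolution [measurable]:
  assumes "(\<lambda>z. w (fst z) (snd z)) \<in> borel_measurable (borel3 \<Otimes>\<^sub>M borel3)"
    and [measurable]: "F \<in> borel_measurable borel3" "G \<in> borel_measurable borel3"
  shows "kernel_convolution b w F G \<in> borel_measurable borel3"
proof -
  have [measurable]: "case_prod w \<in> borel_measurable (borel3 \<Otimes>\<^sub>M borel3)"
    using assms(1) by (simp add: case_prod_beta')
  show ?thesis
    unfolding kernel_convolution_def by measurable
qed

lemma kernel_convolution_estimate:
  fixes F G :: "freq \<Rightarrow> ennreal" and w :: "freq \<Rightarrow> freq \<Rightarrow> ennreal"
  assumes [measurable]: "(\<lambda>z. w (fst z) (snd z)) \<in> borel_measurable (borel3 \<Otimes>\<^sub>M borel3)"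
    "F \<in> borel_measurable borel3" "G \<in> borel_measurable borel3"
    and K: "\<And>p. (\<integral>\<^sup>+q. (kernel b p q * w p q)\<^sup>2 \<partial>lborel3) \<le> K"
  shows "(\<integral>\<^sup>+p. (kernel_convolution b w F G p)\<^sup>2 \<partial>lborel3)
    \<le> K * (\<integral>\<^sup>+q. (F q)\<^sup>2 \<partial>lborel3) * (\<integral>\<^sup>+q. (G q)\<^sup>2 \<partial>lborel3)"
proof -
  have [measurable]: "case_prod w \<in> borel_measurable (borel3 \<Otimes>\<^sub>M borel3)"
    using assms(1) by (simp add: case_prod_beta')
  show ?thesis
    using nn_integral_convolution_Cauchy_Schwarz[of "\<lambda>p q. kernel b p q * w p q" F G K] K
    unfolding kernel_convolution_def lborel_freq_eq borel_measurable_borel3_iff by simp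
qed

lemma kernel_convolution_le_sum3:
  assumes "\<And>q. w p q \<le> w0 p q + w1 p q + w2 p q"
    and [measurable]: "(\<lambda>z. w0 (fst z) (snd z)) \<in> borel_measurable (borel3 \<Otimes>\<^sub>M borel3)"
    "(\<lambda>z. w1 (fst z) (snd z)) \<in> borel_measurable (borel3 \<Otimes>\<^sub>M borel3)"
    "(\<lambda>z. w2 (fst z) (snd z)) \<in> borel_measurable (borel3 \<Otimes>\<^sub>M borel3)"
    "F \<in> borel_measurable borel3" "G \<in> borel_measurable borel3"
  shows "kernel_convolution b w F G p
    \<le> kernel_convolution b w0 F G p + kernel_convolution b w1 F G p + kernel_convolution b w2 F G p"
proof -
  have [measurable]: "w0 p \<in> borel_measurable borel3" "w1 p \<in> borel_measurable borel3" "w2 p \<in> borel_measurable borel3"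
    using measurable_Pair2[OF assms(2), of p] measurable_Pair2[OF assms(3), of p]
      measurable_Pair2[OF assms(4), of p] by (simp_all add: space_pair_measure)
  have "kernel_convolution b w F G p
      \<le> (\<integral>\<^sup>+q. kernel b p q * w0 p q * F q * G (p - q) + kernel b p q * w1 p q * F q * G (p - q)
          + kernel b p q * w2 p q * F q * G (p - q) \<partial>lborel3)"
    unfolding kernel_convolution_def using assms(1)
    by (intro nn_integral_mono) (simp add: mult_left_mono mult_right_mono flip: distrib_left distrib_right)
  also have "\<dots> = kernel_convolution b w0 F G p + kernel_convolution b w1 F G p + kernel_convolution b w2 F G p"
    unfolding kernel_convolution_def by (simp add: nn_integral_add)
  finally show ?thesis .
qed

lemma kernel_slice_convolution_estimate:
  fixes F G :: "freq \<Rightarrow> ennreal"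
  assumes [measurable]: "F \<in> borel_measurable borel3" "G \<in> borel_measurable borel3"
  shows "(\<integral>\<^sup>+z. (\<integral>\<^sup>+y. kernel b (fst z, snd z, \<eta>) (fst y, snd y, c) * F (fst y, snd y, c)
        * G (fst (z - y), snd (z - y), \<eta> - c) \<partial>lborel2)\<^sup>2 \<partial>lborel2)
    \<le> ennreal (2/3) * japan_decay_mass (2 * b) * japan_decay_mass (2 * b)
      * (\<integral>\<^sup>+y. (F (fst y, snd y, c))\<^sup>2 \<partial>lborel2) * (\<integral>\<^sup>+y. (G (fst y, snd y, \<eta> - c))\<^sup>2 \<partial>lborel2)"
  using nn_integral_convolution_Cauchy_Schwarz[of "\<lambda>z y. kernel b (fst z, snd z, \<eta>) (fst y, snd y, c)"
      "\<lambda>y. F (fst y, snd y, c)" "\<lambda>w. G (fst w, snd w, \<eta> - c)"] kernel_slice_bound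
  unfolding lborel_real2_eq borel_measurable_borel2_iff by simp

text \<open>A weight on the output frequency \<open>\<eta>\<close> cannot be moved onto the kernel. Instead, for fixed
  \<open>\<eta>\<close> and \<open>\<eta>\<^sub>1 = c\<close> the kernel is square integrable in \<open>(\<tau>\<^sub>1, \<xi>\<^sub>1)\<close>, and Minkowski's
  inequality reduces the estimate to a convolution in \<open>\<eta>\<close> alone.\<close>

lemma output_weight_convolution_estimate:
  fixes F G :: "freq \<Rightarrow> ennreal"
  assumes [measurable]: "F \<in> borel_measurable borel3" "G \<in> borel_measurable borel3"
  shows "(\<integral>\<^sup>+p. (kernel_convolution b (\<lambda>p q. japan_decay s (snd (snd p))) F G p)\<^sup>2 \<partial>lborel3)
    \<le> ennreal (2/3) * japan_decay_mass (2 * b) * japan_decay_mass (2 * b) * japan_decay_mass (2 * s)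
       * (\<integral>\<^sup>+q. (F q)\<^sup>2 \<partial>lborel3) * (\<integral>\<^sup>+q. (G q)\<^sup>2 \<partial>lborel3)"
proof -
  define K where "K = ennreal (2/3) * japan_decay_mass (2 * b) * japan_decay_mass (2 * b)"
  define A where "A c = (\<integral>\<^sup>+y. (F (fst y, snd y, c))\<^sup>2 \<partial>lborel2)" for c
  define B where "B c = (\<integral>\<^sup>+y. (G (fst y, snd y, c))\<^sup>2 \<partial>lborel2)" for c
  define Y where "Y p c = (\<integral>\<^sup>+y. kernel b p (fst y, snd y, c) * F (fst y, snd y, c)
      * G (p - (fst y, snd y, c)) \<partial>lborel2)" for p c
  have [measurable]: "A \<in> borel_measurable borel" "B \<in> borel_measurable borel"
    unfolding A_def B_def by measurable
  have "(\<lambda>z. Y (fst z) (snd z)) \<in> borel_measurable (borel3 \<Otimes>\<^sub>M borel)"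
    unfolding Y_def by measurable
  then have [measurable]: "case_prod Y \<in> borel_measurable (borel3 \<Otimes>\<^sub>M borel)"
    by (simp add: case_prod_beta')
  have slice: "(\<integral>\<^sup>+z. (Y (fst z, snd z, \<eta>) c)\<^sup>2 \<partial>lborel2) \<le> K * (A c * B (\<eta> - c))" for \<eta> c
    using kernel_slice_convolution_estimate[of F G b \<eta> c] by (simp add: Y_def A_def B_def K_def mult.assoc)
  have "kernel_convolution b (\<lambda>p q. japan_decay s (snd (snd p))) F G p
      = japan_decay s (snd (snd p)) * (\<integral>\<^sup>+c. Y p c \<partial>lborel)" for p
    unfolding kernel_convolution_def Y_def
    by (subst nn_integral_lborel3_eta_last) (measurable, simp add: nn_integral_cmult[symmetric] mult_ac)
  then have "(\<integral>\<^sup>+p. (kernel_convolution b (\<lambda>p q. japan_decay s (snd (snd p))) F G p)\<^sup>2 \<partial>lborel3)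
      = (\<integral>\<^sup>+\<eta>. japan_decay (2 * s) \<eta> * (\<integral>\<^sup>+z. (\<integral>\<^sup>+c. Y (fst z, snd z, \<eta>) c \<partial>lborel)\<^sup>2 \<partial>lborel2) \<partial>lborel)"
    by (subst nn_integral_lborel3_eta_last) (measurable, simp add: power_mult_distrib japan_decay_power2 nn_integral_cmult)
  also have "\<dots> \<le> (\<integral>\<^sup>+\<eta>. japan_decay (2 * s) \<eta>
      * (\<integral>\<^sup>+c. ennsqrt (\<integral>\<^sup>+z. (Y (fst z, snd z, \<eta>) c)\<^sup>2 \<partial>lborel2) \<partial>lborel)\<^sup>2 \<partial>lborel)"
    by (intro nn_integral_mono mult_left_mono lborel2_lborel.nn_integral_Minkowski) simp_all
  also have "\<dots> \<le> (\<integral>\<^sup>+\<eta>. japan_decay (2 * s) \<eta>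
      * (\<integral>\<^sup>+c. ennsqrt K * (ennsqrt (A c) * ennsqrt (B (\<eta> - c))) \<partial>lborel)\<^sup>2 \<partial>lborel)"
    by (intro nn_integral_mono mult_left_mono power_mono) (simp_all add: ennsqrt_mono slice ennsqrt_mult[symmetric])
  also have "\<dots> = (\<integral>\<^sup>+\<eta>. japan_decay (2 * s) \<eta>
      * (K * (\<integral>\<^sup>+c. ennsqrt (A c) * ennsqrt (B (\<eta> - c)) \<partial>lborel)\<^sup>2) \<partial>lborel)"
    by (simp add: nn_integral_cmult power_mult_distrib)
  also have "\<dots> \<le> (\<integral>\<^sup>+\<eta>. japan_decay (2 * s) \<eta> * (K * ((\<integral>\<^sup>+c. A c \<partial>lborel) * (\<integral>\<^sup>+c. B c \<partial>lborel))) \<partial>lborel)"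
    by (intro nn_integral_mono mult_left_mono nn_integral_ennsqrt_convolution_le) simp_all
  also have "\<dots> = japan_decay_mass (2 * s) * K * (\<integral>\<^sup>+c. A c \<partial>lborel) * (\<integral>\<^sup>+c. B c \<partial>lborel)"
    by (subst nn_integral_multc) (simp_all add: japan_decay_mass_def mult_ac)
  finally show ?thesis
    by (simp add: A_def B_def K_def nn_integral_lborel3_eta_last mult_ac)
qed

text \<open>Input weights are absorbed into the kernel; the output weight needs the previous lemma.\<close>

lemma weighted_kernel_convolution_estimate:
  fixes F G :: "freq \<Rightarrow> ennreal"
  assumes [measurable]: "F \<in> borel_measurable borel3" "G \<in> borel_measurable borel3"
    and s: "s0 \<ge> 0" "s1 \<ge> 0" "s2 \<ge> 0"
  shows "(\<integral>\<^sup>+p. (kernel_convolution b (\<lambda>p q. japan_decay s0 (snd (snd p)) * japan_decay s1 (snd (snd q))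
        * japan_decay s2 (snd (snd p) - snd (snd q))) F G p)\<^sup>2 \<partial>lborel3)
    \<le> 9 * (ennreal (2/3) * japan_decay_mass (2 * b) * japan_decay_mass (2 * b) * japan_decay_mass (2 * (s0 + s1 + s2)))
      * (\<integral>\<^sup>+q. (F q)\<^sup>2 \<partial>lborel3) * (\<integral>\<^sup>+q. (G q)\<^sup>2 \<partial>lborel3)"
proof -
  define s where "s = s0 + s1 + s2"
  define K where "K = ennreal (2/3) * japan_decay_mass (2 * b) * japan_decay_mass (2 * b) * japan_decay_mass (2 * s)"
  define NF where "NF = (\<integral>\<^sup>+q. (F q)\<^sup>2 \<partial>lborel3)"
  define NG where "NG = (\<integral>\<^sup>+q. (G q)\<^sup>2 \<partial>lborel3)"
  define T where "T w = kernel_convolution b w F G" for w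
  define W :: "freq \<Rightarrow> freq \<Rightarrow> ennreal" where "W = (\<lambda>p q. japan_decay s0 (snd (snd p)) * japan_decay s1 (snd (snd q))
      * japan_decay s2 (snd (snd p) - snd (snd q)))"
  define w0 where "w0 p q = japan_decay s (snd (snd p))" for p q :: freq
  define w1 where "w1 p q = japan_decay s (snd (snd q))" for p q :: freq
  define w2 where "w2 p q = japan_decay s (snd (snd p) - snd (snd q))" for p q :: freq
  have [measurable]: "(\<lambda>z. w0 (fst z) (snd z)) \<in> borel_measurable (borel3 \<Otimes>\<^sub>M borel3)"
    "(\<lambda>z. w1 (fst z) (snd z)) \<in> borel_measurable (borel3 \<Otimes>\<^sub>M borel3)"
    "(\<lambda>z. w2 (fst z) (snd z)) \<in> borel_measurable (borel3 \<Otimes>\<^sub>M borel3)"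
    unfolding w0_def w1_def w2_def by measurable
  have T0: "(\<integral>\<^sup>+p. (T w0 p)\<^sup>2 \<partial>lborel3) \<le> K * NF * NG"
    unfolding T_def w0_def K_def NF_def NG_def by (rule output_weight_convolution_estimate) measurable
  have T1: "(\<integral>\<^sup>+p. (T w1 p)\<^sup>2 \<partial>lborel3) \<le> K * NF * NG"
    unfolding T_def NF_def NG_def using kernel_weighted_bound[of b _ "2 * s"]
    by (intro kernel_convolution_estimate) (simp_all add: K_def w1_def power_mult_distrib japan_decay_power2)
  have T2: "(\<integral>\<^sup>+p. (T w2 p)\<^sup>2 \<partial>lborel3) \<le> K * NF * NG"
    unfolding T_def NF_def NG_def using kernel_difference_weighted_bound[of b _ "2 * s"]
    by (intro kernel_convolution_estimate) (simp_all add: K_def w2_def power_mult_distrib japan_decay_power2)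
  have split: "T W p \<le> T w0 p + T w1 p + T w2 p" for p
    unfolding T_def using japan_decay_product_le_sum[OF s]
    by (intro kernel_convolution_le_sum3) (simp_all add: W_def w0_def w1_def w2_def s_def)
  have "(\<integral>\<^sup>+p. (T W p)\<^sup>2 \<partial>lborel3) \<le> (\<integral>\<^sup>+p. 3 * ((T w0 p)\<^sup>2 + (T w1 p)\<^sup>2 + (T w2 p)\<^sup>2) \<partial>lborel3)"
    by (intro nn_integral_mono order_trans[OF power_mono[OF split] ennreal_power2_sum3_le]) simp
  also have "\<dots> = 3 * ((\<integral>\<^sup>+p. (T w0 p)\<^sup>2 \<partial>lborel3) + (\<integral>\<^sup>+p. (T w1 p)\<^sup>2 \<partial>lborel3) + (\<integral>\<^sup>+p. (T w2 p)\<^sup>2 \<partial>lborel3))"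
    by (simp add: T_def nn_integral_add nn_integral_cmult borel_measurable_add)
  also have "\<dots> \<le> 3 * (K * NF * NG + K * NF * NG + K * NF * NG)"
    using T0 T1 T2 by (intro mult_left_mono add_mono) simp_all
  also have "\<dots> = 9 * K * NF * NG"
  proof -
    have "x + x + x = (1 + 1 + 1) * x" for x :: ennreal
      by (simp only: distrib_right mult_1)
    moreover have "(1 + 1 + 1 :: ennreal) = 3"
      by simp
    ultimately show ?thesis
      by (simp add: mult.assoc)
  qed
  finally show ?thesis
    by (simp only: T_def W_def K_def NF_def NG_def s_def)
qed

section \<open>Reduction of the operators to the kernel estimate\<close>

definition swap_xi_eta :: "freq \<Rightarrow> freq" where
  "swap_xi_eta q = (fst q, snd (snd q), fst (snd q))"

lemma measurable_swap_xi_eta [measurable]: "swap_xi_eta \<in> borel3 \<rightarrow>\<^sub>M borel3"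
  unfolding swap_xi_eta_def by measurable

lemma modulation_swap_xi_eta [simp]: "modulation (swap_xi_eta q) = modulation q"
  by (simp add: modulation_def swap_xi_eta_def)

definition bil_majorant :: "real \<Rightarrow> (freq \<Rightarrow> complex) \<Rightarrow> (freq \<Rightarrow> complex) \<Rightarrow> freq \<Rightarrow> ennreal" where
  "bil_majorant s0 f g p = ennreal (japan (snd (snd p)) powr (-s0) * sqrt \<bar>fst (snd p)\<bar>)
     * (\<integral>\<^sup>+q. ennreal (sqrt \<bar>2 * fst (snd q) - fst (snd p)\<bar> * norm (f q) * norm (g (p - q))) \<partial>lborel3)"

lemma norm_bil_x_le_majorant: "ennreal (norm (bil_x s0 f g p)) \<le> bil_majorant s0 f g p"
proof -
  obtain \<tau> \<xi> \<eta> where p: "p = (\<tau>, \<xi>, \<eta>)"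
    by (cases p) auto
  define h where "h q = (case q of (\<tau>1, \<xi>1, \<eta>1) \<Rightarrow>
      complex_of_real (sqrt \<bar>\<xi>1 - (\<xi> - \<xi>1)\<bar>) * f (\<tau>1, \<xi>1, \<eta>1) * g (\<tau> - \<tau>1, \<xi> - \<xi>1, \<eta> - \<eta>1))" for q
  define r where "r = japan \<eta> powr (- s0) * sqrt \<bar>\<xi>\<bar>"
  have "ennreal (norm (bil_x s0 f g p)) = ennreal r * ennreal (norm (integral\<^sup>L lborel h))"
    unfolding bil_x_def p h_def r_def by (simp add: norm_mult ennreal_mult)
  also have "\<dots> \<le> ennreal r * (\<integral>\<^sup>+q. ennreal (norm (h q)) \<partial>lborel)"
    by (intro mult_left_mono ennreal_norm_integral_le) simp
  also have "(\<integral>\<^sup>+q. ennreal (norm (h q)) \<partial>lborel)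
      = (\<integral>\<^sup>+q. ennreal (sqrt \<bar>2 * fst (snd q) - fst (snd p)\<bar> * norm (f q) * norm (g (p - q))) \<partial>lborel3)"
    unfolding lborel_freq_eq
    by (intro nn_integral_cong) (auto simp: h_def p norm_mult algebra_simps)
  finally show ?thesis
    unfolding bil_majorant_def r_def p by simp
qed

lemma norm_bil_y_le_majorant:
  assumes [measurable]: "f \<in> borel_measurable borel3" "g \<in> borel_measurable borel3"
  shows "ennreal (norm (bil_y s0 f g p)) \<le> bil_majorant s0 (f \<circ> swap_xi_eta) (g \<circ> swap_xi_eta) (swap_xi_eta p)"
proof -
  obtain \<tau> \<xi> \<eta> where p: "p = (\<tau>, \<xi>, \<eta>)"
    by (cases p) auto
  define h where "h q = (case q of (\<tau>1, \<xi>1, \<eta>1) \<Rightarrow>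
      complex_of_real (sqrt \<bar>\<eta>1 - (\<eta> - \<eta>1)\<bar>) * f (\<tau>1, \<xi>1, \<eta>1) * g (\<tau> - \<tau>1, \<xi> - \<xi>1, \<eta> - \<eta>1))" for q
  define r where "r = japan \<xi> powr (- s0) * sqrt \<bar>\<eta>\<bar>"
  define \<Phi> where "\<Phi> q = ennreal (sqrt \<bar>2 * snd (snd q) - \<eta>\<bar> * norm (f q) * norm (g (p - q)))" for q
  have [measurable]: "\<Phi> \<in> borel_measurable borel3"
    unfolding \<Phi>_def by measurable
  have "ennreal (norm (bil_y s0 f g p)) = ennreal r * ennreal (norm (integral\<^sup>L lborel h))"
    unfolding bil_y_def p h_def r_def by (simp add: norm_mult ennreal_mult)
  also have "\<dots> \<le> ennreal r * (\<integral>\<^sup>+q. ennreal (norm (h q)) \<partial>lborel)"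
    by (intro mult_left_mono ennreal_norm_integral_le) simp
  also have "(\<integral>\<^sup>+q. ennreal (norm (h q)) \<partial>lborel) = (\<integral>\<^sup>+q. \<Phi> q \<partial>lborel3)"
    unfolding lborel_freq_eq
    by (intro nn_integral_cong) (auto simp: h_def p \<Phi>_def norm_mult algebra_simps)
  also have "\<dots> = (\<integral>\<^sup>+q. \<Phi> (swap_xi_eta q) \<partial>lborel3)"
    unfolding swap_xi_eta_def by (rule nn_integral_lborel3_swap_xi_eta[symmetric]) measurable
  finally show ?thesis
    unfolding bil_majorant_def r_def \<Phi>_def by (simp add: swap_xi_eta_def p)
qed

definition weighted_modulus :: "real \<Rightarrow> real \<Rightarrow> (freq \<Rightarrow> complex) \<Rightarrow> freq \<Rightarrow> ennreal" where
  "weighted_modulus b s f q = ennreal (japan (modulation q) powr b * japan (snd (snd q)) powr s * norm (f q))"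

lemma borel_measurable_weighted_modulus [measurable]:
  "f \<in> borel_measurable borel3 \<Longrightarrow> weighted_modulus b s f \<in> borel_measurable borel3"
  unfolding weighted_modulus_def by measurable

lemma X0b_sq_eta_eq: "X0b_sq b (\<lambda>p. japan (snd (snd p)) powr s) f = (\<integral>\<^sup>+q. (weighted_modulus b s f q)\<^sup>2 \<partial>lborel3)"
  unfolding X0b_sq_def lborel_freq_eq
  by (intro nn_integral_cong) (simp add: weighted_modulus_def modulation_def ennreal_power)

lemma X0b_sq_xi_eq:
  assumes [measurable]: "f \<in> borel_measurable borel3"
  shows "X0b_sq b (\<lambda>p. japan (fst (snd p)) powr s) f
    = (\<integral>\<^sup>+q. (weighted_modulus b s (f \<circ> swap_xi_eta) q)\<^sup>2 \<partial>lborel3)"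
proof -
  define \<Phi> where "\<Phi> q = (ennreal (japan (modulation q) powr b * japan (fst (snd q)) powr s * norm (f q)))\<^sup>2" for q
  have [measurable]: "\<Phi> \<in> borel_measurable borel3"
    unfolding \<Phi>_def by measurable
  have "X0b_sq b (\<lambda>p. japan (fst (snd p)) powr s) f = (\<integral>\<^sup>+q. \<Phi> q \<partial>lborel3)"
    unfolding X0b_sq_def lborel_freq_eq
    by (intro nn_integral_cong) (simp add: \<Phi>_def modulation_def ennreal_power)
  also have "\<dots> = (\<integral>\<^sup>+q. \<Phi> (swap_xi_eta q) \<partial>lborel3)"
    unfolding swap_xi_eta_def by (rule nn_integral_lborel3_swap_xi_eta[symmetric]) measurable
  finally show ?thesis
    unfolding \<Phi>_def weighted_modulus_def modulation_swap_xi_eta by (simp add: swap_xi_eta_def)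
qed

lemma bil_majorant_eq_kernel_convolution:
  assumes [measurable]: "f \<in> borel_measurable borel3" "g \<in> borel_measurable borel3"
  shows "bil_majorant s0 f g p = kernel_convolution b (\<lambda>p q. japan_decay s0 (snd (snd p))
      * japan_decay s1 (snd (snd q)) * japan_decay s2 (snd (snd p) - snd (snd q)))
      (weighted_modulus b s1 f) (weighted_modulus b s2 g) p"
proof -
  have "ennreal (japan (snd (snd p)) powr (-s0) * sqrt \<bar>fst (snd p)\<bar>)
      * ennreal (sqrt \<bar>2 * fst (snd q) - fst (snd p)\<bar> * norm (f q) * norm (g (p - q)))
    = kernel b p q * (japan_decay s0 (snd (snd p)) * japan_decay s1 (snd (snd q))
      * japan_decay s2 (snd (snd p) - snd (snd q))) * weighted_modulus b s1 f q * weighted_modulus b s2 g (p - q)"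
    for q
  proof -
    define \<xi> \<xi>1 \<eta> \<eta>1 where "\<xi> = fst (snd p)" "\<xi>1 = fst (snd q)" "\<eta> = snd (snd p)" "\<eta>1 = snd (snd q)"
    define a c where "a = japan (modulation q)" "c = japan (modulation (p - q))"
    have pos: "a > 0" "c > 0" "japan \<eta>1 > 0" "japan (\<eta> - \<eta>1) > 0"
      by (simp_all add: a_c_def japan_gt_0)
    have cancel: "(a powr (-b) * a powr b) * (c powr (-b) * c powr b) * (japan \<eta>1 powr (-s1) * japan \<eta>1 powr s1)
        * (japan (\<eta> - \<eta>1) powr (-s2) * japan (\<eta> - \<eta>1) powr s2) = 1"
      using pos by (simp add: powr_add[symmetric])
    have "kernel b p q * (japan_decay s0 \<eta> * japan_decay s1 \<eta>1 * japan_decay s2 (\<eta> - \<eta>1))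
        * weighted_modulus b s1 f q * weighted_modulus b s2 g (p - q)
      = ennreal ((sqrt \<bar>\<xi>\<bar> * sqrt \<bar>2 * \<xi>1 - \<xi>\<bar>) * a powr (-b) * c powr (-b)
          * (japan \<eta> powr (-s0) * japan \<eta>1 powr (-s1) * japan (\<eta> - \<eta>1) powr (-s2))
          * (a powr b * japan \<eta>1 powr s1 * norm (f q)) * (c powr b * japan (\<eta> - \<eta>1) powr s2 * norm (g (p - q))))"
      unfolding kernel_def japan_decay_def weighted_modulus_def \<xi>_\<xi>1_\<eta>_\<eta>1_def a_c_def
      by (simp add: ennreal_mult'[symmetric])
    also have "\<dots> = ennreal ((japan \<eta> powr (-s0) * sqrt \<bar>\<xi>\<bar>) * (sqrt \<bar>2 * \<xi>1 - \<xi>\<bar> * norm (f q) * norm (g (p - q)))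
        * ((a powr (-b) * a powr b) * (c powr (-b) * c powr b) * (japan \<eta>1 powr (-s1) * japan \<eta>1 powr s1)
        * (japan (\<eta> - \<eta>1) powr (-s2) * japan (\<eta> - \<eta>1) powr s2)))"
      by (simp only: ac_simps)
    also have "\<dots> = ennreal ((japan \<eta> powr (-s0) * sqrt \<bar>\<xi>\<bar>) * (sqrt \<bar>2 * \<xi>1 - \<xi>\<bar> * norm (f q) * norm (g (p - q))))"
      by (simp only: cancel mult_1_right)
    finally show ?thesis
      unfolding \<xi>_\<xi>1_\<eta>_\<eta>1_def by (simp add: ennreal_mult'[symmetric])
  qed
  note pointwise = this
  show ?thesis
    unfolding bil_majorant_def kernel_convolution_def
    by (subst nn_integral_cmult[symmetric]) (measurable, simp add: pointwise)
qed

lemma L2_sq_bil_x_le_majorant: "L2_sq (bil_x s0 f g) \<le> (\<integral>\<^sup>+p. (bil_majorant s0 f g p)\<^sup>2 \<partial>lborel3)"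
  unfolding L2_sq_def lborel_freq_eq
  by (intro nn_integral_mono ennreal_power2_le_of_le norm_bil_x_le_majorant) simp

lemma L2_sq_bil_y_le_majorant:
  assumes [measurable]: "f \<in> borel_measurable borel3" "g \<in> borel_measurable borel3"
  shows "L2_sq (bil_y s0 f g)
    \<le> (\<integral>\<^sup>+p. (bil_majorant s0 (f \<circ> swap_xi_eta) (g \<circ> swap_xi_eta) p)\<^sup>2 \<partial>lborel3)"
proof -
  have [measurable]: "f \<circ> swap_xi_eta \<in> borel_measurable borel3" "g \<circ> swap_xi_eta \<in> borel_measurable borel3"
    by (simp_all add: measurable_comp[OF measurable_swap_xi_eta])
  define h where "h p = (bil_majorant s0 (f \<circ> swap_xi_eta) (g \<circ> swap_xi_eta) p)\<^sup>2" for p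
  have [measurable]: "h \<in> borel_measurable borel3"
    unfolding h_def bil_majorant_def by measurable
  have "L2_sq (bil_y s0 f g) \<le> (\<integral>\<^sup>+p. h (swap_xi_eta p) \<partial>lborel3)"
    unfolding L2_sq_def lborel_freq_eq h_def
    by (intro nn_integral_mono ennreal_power2_le_of_le norm_bil_y_le_majorant) simp_all
  also have "\<dots> = (\<integral>\<^sup>+p. h p \<partial>lborel3)"
    unfolding swap_xi_eta_def by (rule nn_integral_lborel3_swap_xi_eta) measurable
  finally show ?thesis
    unfolding h_def .
qed

lemma bil_majorant_L2_estimate:
  assumes [measurable]: "f \<in> borel_measurable borel3" "g \<in> borel_measurable borel3"
    and "s0 \<ge> 0" "s1 \<ge> 0" "s2 \<ge> 0"
  shows "(\<integral>\<^sup>+p. (bil_majorant s0 f g p)\<^sup>2 \<partial>lborel3)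
    \<le> 9 * (ennreal (2/3) * japan_decay_mass (2 * b) * japan_decay_mass (2 * b) * japan_decay_mass (2 * (s0 + s1 + s2)))
      * (\<integral>\<^sup>+q. (weighted_modulus b s1 f q)\<^sup>2 \<partial>lborel3) * (\<integral>\<^sup>+q. (weighted_modulus b s2 g q)\<^sup>2 \<partial>lborel3)"
  using weighted_kernel_convolution_estimate[of "weighted_modulus b s1 f" "weighted_modulus b s2 g" s0 s1 s2 b] assms
  by (simp add: bil_majorant_eq_kernel_convolution[of f g s0 _ b s1 s2])

lemma borel_measurable_lborel_freq_borel3:
  "f \<in> borel_measurable (lborel :: freq measure) \<Longrightarrow> f \<in> borel_measurable borel3"
  by (simp add: borel_measurable_borel3_iff[symmetric])

lemma bil_x_estimate:
  assumes "f \<in> borel_measurable lborel" "g \<in> borel_measurable lborel"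
    and "s0 \<ge> 0" "s1 \<ge> 0" "s2 \<ge> 0"
  shows "L2_sq (bil_x s0 f g)
    \<le> 9 * (ennreal (2/3) * japan_decay_mass (2 * b) * japan_decay_mass (2 * b) * japan_decay_mass (2 * (s0 + s1 + s2)))
      * X0b_sq b (\<lambda>p. japan (snd (snd p)) powr s1) f * X0b_sq b (\<lambda>p. japan (snd (snd p)) powr s2) g"
  using order_trans[OF L2_sq_bil_x_le_majorant bil_majorant_L2_estimate] assms
  by (simp add: X0b_sq_eta_eq borel_measurable_lborel_freq_borel3)

lemma bil_y_estimate:
  assumes "f \<in> borel_measurable lborel" "g \<in> borel_measurable lborel"
    and "s0 \<ge> 0" "s1 \<ge> 0" "s2 \<ge> 0"
  shows "L2_sq (bil_y s0 f g)
    \<le> 9 * (ennreal (2/3) * japan_decay_mass (2 * b) * japan_decay_mass (2 * b) * japan_decay_mass (2 * (s0 + s1 + s2)))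
      * X0b_sq b (\<lambda>p. japan (fst (snd p)) powr s1) f * X0b_sq b (\<lambda>p. japan (fst (snd p)) powr s2) g"
proof -
  have [measurable]: "f \<in> borel_measurable borel3" "g \<in> borel_measurable borel3"
    using assms(1,2) by (simp_all add: borel_measurable_lborel_freq_borel3)
  have [measurable]: "f \<circ> swap_xi_eta \<in> borel_measurable borel3" "g \<circ> swap_xi_eta \<in> borel_measurable borel3"
    by (simp_all add: measurable_comp[OF measurable_swap_xi_eta])
  show ?thesis
    using order_trans[OF L2_sq_bil_y_le_majorant bil_majorant_L2_estimate] assms(3-5)
    by (simp add: X0b_sq_xi_eq)
qed

theorem mainTheorem6:
  fixes s0 s1 s2 b :: real
  assumes "s0 \<ge> 0" "s1 \<ge> 0" "s2 \<ge> 0" "s0 + s1 + s2 > 1/2" "b > 1/2"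
  shows "\<exists>C > 0.
    (\<forall>f g :: freq \<Rightarrow> complex.
       f \<in> borel_measurable lborel \<longrightarrow> g \<in> borel_measurable lborel \<longrightarrow>
       X0b_sq b (\<lambda>p. japan (snd (snd p)) powr s1) f < \<infinity> \<longrightarrow>
       X0b_sq b (\<lambda>p. japan (snd (snd p)) powr s2) g < \<infinity> \<longrightarrow>
       L2_sq (bil_x s0 f g) \<le> ennreal (C\<^sup>2)
          * X0b_sq b (\<lambda>p. japan (snd (snd p)) powr s1) f
          * X0b_sq b (\<lambda>p. japan (snd (snd p)) powr s2) g)
  \<and> (\<forall>f g :: freq \<Rightarrow> complex.
       f \<in> borel_measurable lborel \<longrightarrow> g \<in> borel_measurable lborel \<longrightarrow>
       X0b_sq b (\<lambda>p. japan (fst (snd p)) powr s1) f < \<infinity> \<longrightarrow>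
       X0b_sq b (\<lambda>p. japan (fst (snd p)) powr s2) g < \<infinity> \<longrightarrow>
       L2_sq (bil_y s0 f g) \<le> ennreal (C\<^sup>2)
          * X0b_sq b (\<lambda>p. japan (fst (snd p)) powr s1) f
          * X0b_sq b (\<lambda>p. japan (fst (snd p)) powr s2) g)"
proof -
  define K where "K = 9 * (ennreal (2/3) * japan_decay_mass (2 * b) * japan_decay_mass (2 * b)
      * japan_decay_mass (2 * (s0 + s1 + s2)))"
  have "japan_decay_mass (2 * b) < \<infinity>"
    by (rule japan_decay_mass_finite) (use assms(5) in simp)
  moreover have "japan_decay_mass (2 * (s0 + s1 + s2)) < \<infinity>"
    by (rule japan_decay_mass_finite) (use assms(4) in simp)
  ultimately have "K < \<infinity>"
    by (simp add: K_def ennreal_mult_less_top)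
  then obtain C where "C > 0" and K: "K \<le> ennreal (C\<^sup>2)"
    by (rule ennreal_le_power2_of_less_top)
  show ?thesis
  proof (intro exI[of _ C] conjI allI impI \<open>C > 0\<close>)
    fix f g :: "freq \<Rightarrow> complex"
    assume fg: "f \<in> borel_measurable lborel" "g \<in> borel_measurable lborel"
    have "L2_sq (bil_x s0 f g) \<le> K * X0b_sq b (\<lambda>p. japan (snd (snd p)) powr s1) f
        * X0b_sq b (\<lambda>p. japan (snd (snd p)) powr s2) g"
      unfolding K_def by (rule bil_x_estimate[OF fg assms(1-3)])
    also have "\<dots> \<le> ennreal (C\<^sup>2) * X0b_sq b (\<lambda>p. japan (snd (snd p)) powr s1) f
        * X0b_sq b (\<lambda>p. japan (snd (snd p)) powr s2) g"
      by (intro mult_right_mono K) simp_all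
    finally show "L2_sq (bil_x s0 f g) \<le> \<dots>" .
    have "L2_sq (bil_y s0 f g) \<le> K * X0b_sq b (\<lambda>p. japan (fst (snd p)) powr s1) f
        * X0b_sq b (\<lambda>p. japan (fst (snd p)) powr s2) g"
      unfolding K_def by (rule bil_y_estimate[OF fg assms(1-3)])
    also have "\<dots> \<le> ennreal (C\<^sup>2) * X0b_sq b (\<lambda>p. japan (fst (snd p)) powr s1) f
        * X0b_sq b (\<lambda>p. japan (fst (snd p)) powr s2) g"
      by (intro mult_right_mono K) simp_all
    finally show "L2_sq (bil_y s0 f g) \<le> \<dots>" .
  qed
qed

end
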